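(* Let $\mathbb{I}>0$, $\xi>0$, $0<c\le1$, and for $\ell>0$ let $g_{c,\xi}(\ell)=4c\ell^2\int_0^\infty u^2\,\Phi\big(-\frac{u\ell\xi\sqrt{c\mathbb{I}}}{2}\big)\phi(u)\,du$. Then $g_{c,\xi}$ is maximized at $\ell_{opt}=\frac{2.426}{\xi\sqrt{c\,\mathbb{I}}}$ (constant to three decimals), and $$\alpha_{opt}=4\int_0^\infty\Phi\Big(-\frac{u\ell_{opt}\xi\sqrt{c\,\mathbb{I}}}{2}\Big)\phi(u)\,du=0.439$$ up to three decimal places.
   Context: $\Phi,\phi$ are the standard normal cdf and density; $g_{c,\xi}$ is the diffusion speed of the limiting diffusion of additive TMCMC-within-Gibbs for independent non-identically scaled product targets and $\alpha_{opt}$ the corresponding optimal acceptance rate. *)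

theory Defs
  imports "HOL-Probability.Probability"
begin

definition std_phi :: "real \<Rightarrow> real" where
  "std_phi x = std_normal_density x"

definition std_Phi :: "real \<Rightarrow> real" where
  "std_Phi x = (LBINT t:{..x}. std_phi t)"

definition g_speed :: "real \<Rightarrow> real \<Rightarrow> real \<Rightarrow> real \<Rightarrow> real" where
  "g_speed I c \<xi> l =
     4 * c * l\<^sup>2 * (LBINT u:{0..}. u\<^sup>2 * std_Phi (- (u * l * \<xi> * sqrt (c * I)) / 2) * std_phi u)"

definition acc_rate :: "real \<Rightarrow> real \<Rightarrow> real \<Rightarrow> real \<Rightarrow> real" where
  "acc_rate I c \<xi> l =
     4 * (LBINT u:{0..}. std_Phi (- (u * l * \<xi> * sqrt (c * I)) / 2) * std_phi u)"

definition round3 :: "real \<Rightarrow> real" where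
  "round3 x = real_of_int (round (1000 * x)) / 1000"

end

theory Submission
  imports Defs "HOL-Real_Asymp.Real_Asymp"
begin

text \<open>
  Writing \<open>\<Phi>(-au) = u \<integral>\<^sub>a\<^sup>\<infinity> \<phi>(uv) dv\<close> and exchanging the order of integration turns the
  integrals over \<open>u\<close> into Gaussian integrals, which gives the closed forms
  \<open>\<integral>\<^sub>0\<^sup>\<infinity> \<Phi>(-au) \<phi>(u) du = 1/4 - arctan a / (2\<pi>)\<close> and
  \<open>\<integral>\<^sub>0\<^sup>\<infinity> u\<^sup>2 \<Phi>(-au) \<phi>(u) du = 1/4 - (arctan a + a/(1+a\<^sup>2)) / (2\<pi>)\<close>.
  With \<open>a = \<ell>\<xi>\<surd>(c\<I>)/2\<close>, the speed \<open>g\<^sub>c\<^sub>,\<^sub>\<xi>(\<ell>)\<close> is a positive multiple of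
  \<open>M(a) = a\<^sup>2 (1/4 - (arctan a + a/(1+a\<^sup>2)) / (2\<pi>))\<close>, whose derivative has the sign of
  \<open>E(a) = \<pi>/2 - arctan a - a/(1+a\<^sup>2) - a/(1+a\<^sup>2)\<^sup>2\<close>. The function \<open>E\<close> decreases on
  \<open>(0, \<surd>3)\<close> and is negative from \<open>1.7\<close> on; certified Taylor bounds for \<open>arctan\<close> show that it changes
  sign in \<open>[1.2128, 1.21324]\<close>, so every maximiser \<open>a\<close> lies there. Both \<open>2a\<close> and the
  acceptance rate \<open>1 - 2 arctan a / \<pi>\<close> are then determined to three decimals.
\<close>

lemma one_add_power2_pos [simp]: "0 < 1 + (x::real)^2"
  by (simp add: add_pos_nonneg)

lemma one_add_power2_neq_zero [simp]: "1 + (x::real)^2 \<noteq> 0"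
  using one_add_power2_pos[of x] by linarith

lemma arctan_le_taylor5:
  fixes y :: real
  assumes "0 \<le> y"
  shows "arctan y \<le> y - y^3/3 + y^5/5"
proof -
  let ?f = "\<lambda>y. y - y^3/3 + y^5/5 - arctan y"
  have deriv: "(?f has_real_derivative y^6/(1+y^2)) (at y)" for y :: real
  proof -
    have "(?f has_real_derivative 1 - y^2 + y^4 - 1/(1+y^2)) (at y)"
      by (auto intro!: derivative_eq_intros simp: field_simps power2_eq_square)
    also have "1 - y^2 + y^4 - 1/(1+y^2) = y^6/(1+y^2)"
      by (simp add: divide_simps) algebra
    finally show ?thesis .
  qed
  have "0 \<le> y^6/(1+y^2)" for y :: real
    by simp
  with deriv have "?f 0 \<le> ?f y"
    by (intro DERIV_nonneg_imp_nondecreasing[of 0 y ?f] assms) blast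
  then show ?thesis by simp
qed

lemma taylor7_le_arctan:
  fixes y :: real
  assumes "0 \<le> y"
  shows "y - y^3/3 + y^5/5 - y^7/7 \<le> arctan y"
proof -
  let ?f = "\<lambda>y. arctan y - (y - y^3/3 + y^5/5 - y^7/7)"
  have deriv: "(?f has_real_derivative y^8/(1+y^2)) (at y)" for y :: real
  proof -
    have "(?f has_real_derivative 1/(1+y^2) - (1 - y^2 + y^4 - y^6)) (at y)"
      by (auto intro!: derivative_eq_intros simp: field_simps power2_eq_square)
    also have "1/(1+y^2) - (1 - y^2 + y^4 - y^6) = y^8/(1+y^2)"
      by (simp add: divide_simps) algebra
    finally show ?thesis .
  qed
  have "0 \<le> y^8/(1+y^2)" for y :: real
    by simp
  with deriv have "?f 0 \<le> ?f y"
    by (intro DERIV_nonneg_imp_nondecreasing[of 0 y ?f] assms) blast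
  then show ?thesis by simp
qed

lemma arctan_eq_pi_div_4_plus_arctan:
  fixes a :: real
  assumes "0 < a"
  shows "arctan a = pi/4 + arctan ((a - 1)/(a + 1))"
proof -
  have "arctan 1 + arctan ((a - 1)/(a + 1)) = arctan ((1 + (a - 1)/(a + 1)) / (1 - 1 * ((a - 1)/(a + 1))))"
    using assms by (intro arctan_add) (auto simp: abs_less_iff field_simps)
  also have "(1 + (a - 1)/(a + 1)) / (1 - 1 * ((a - 1)/(a + 1))) = a"
    using assms by (simp add: field_simps)
  finally show ?thesis by simp
qed

lemma DERIV_pos_imp_less_lim_at_top:
  fixes f :: "real \<Rightarrow> real"
  assumes "\<And>x. b \<le> x \<Longrightarrow> \<exists>y. DERIV f x :> y \<and> 0 < y"
    and "(f \<longlongrightarrow> L) at_top"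
  shows "f b < L"
proof -
  have "\<exists>y. ((\<lambda>x. - f x) has_real_derivative y) (at x) \<and> y < 0" if "b \<le> x" for x
    using assms(1)[OF that] by (fastforce intro: DERIV_minus)
  moreover have "((\<lambda>x. - f x) \<longlongrightarrow> - L) at_top"
    using assms(2) by (rule tendsto_minus)
  ultimately have "- L < - f b"
    by (rule DERIV_neg_imp_decreasing_at_top)
  then show ?thesis by simp
qed

lemma std_phi_eq: "std_phi x = exp (- (x^2)/2) / sqrt (2*pi)"
  unfolding std_phi_def std_normal_density_def by simp

lemma std_phi_nonneg: "0 \<le> std_phi x"
  unfolding std_phi_eq by simp

lemma std_phi_minus: "std_phi (- x) = std_phi x"
  unfolding std_phi_eq by simp

lemma std_phi_measurable [measurable]: "std_phi \<in> borel_measurable borel"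
  unfolding std_phi_eq[abs_def] by measurable

lemma std_phi_mult_std_phi: "std_phi u * std_phi (u * v) = exp (- ((1 + v^2) * u^2)/2) / (2*pi)"
proof -
  have "exp (- (u^2)/2) * exp (- ((u * v)^2)/2) = exp (- ((1 + v^2) * u^2)/2)"
    by (simp add: exp_add[symmetric] power_mult_distrib algebra_simps add_divide_distrib)
  moreover have "sqrt (2*pi) * sqrt (2*pi) = 2*pi"
    by simp
  ultimately show ?thesis
    unfolding std_phi_eq by (metis times_divide_times_eq)
qed

lemma nn_integral_std_Phi:
  "ennreal (std_Phi x) = (\<integral>\<^sup>+t. ennreal (indicator {..x} t * std_phi t) \<partial>lborel)"
proof -
  have "integrable lborel std_phi"
    using integrable_std_normal_moment[of 0] unfolding std_phi_def by simp
  then have "integrable lborel (\<lambda>t. indicator {..x} t * std_phi t)"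
    using integrable_real_mult_indicator[of "{..x}"] by (simp add: mult.commute)
  then show ?thesis
    unfolding std_Phi_def set_lebesgue_integral_def
    by (simp add: nn_integral_eq_integral std_phi_nonneg)
qed

lemma std_Phi_nonneg: "0 \<le> std_Phi x"
  unfolding std_Phi_def set_lebesgue_integral_def
  by (rule integral_nonneg_AE) (simp add: std_phi_nonneg)

lemma mono_std_Phi: "mono std_Phi"
proof (rule monoI)
  fix x y :: real
  assume "x \<le> y"
  then have "ennreal (std_Phi x) \<le> ennreal (std_Phi y)"
    unfolding nn_integral_std_Phi
    by (intro nn_integral_mono) (auto split: split_indicator intro!: ennreal_leI simp: std_phi_nonneg)
  then show "std_Phi x \<le> std_Phi y"
    using std_Phi_nonneg[of y] by (simp add: ennreal_le_iff)
qed

lemma std_Phi_measurable [measurable]: "std_Phi \<in> borel_measurable borel"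
  by (rule borel_measurable_mono[OF mono_std_Phi])

lemma std_Phi_minus_mult_eq_nn_integral:
  assumes "0 < u"
  shows "ennreal (std_Phi (- (a * u))) = (\<integral>\<^sup>+v. ennreal (u * std_phi (u * v) * indicator {a..} v) \<partial>lborel)"
proof -
  have "ennreal (std_Phi (- (a * u))) = (\<integral>\<^sup>+t. ennreal (indicator {..- (a * u)} t * std_phi t) \<partial>lborel)"
    by (rule nn_integral_std_Phi)
  also have "\<dots> = \<bar>- u\<bar> * (\<integral>\<^sup>+v. ennreal (indicator {..- (a * u)} (0 + (- u) * v) * std_phi (0 + (- u) * v)) \<partial>lborel)"
    using assms by (intro nn_integral_real_affine) auto
  also have "\<dots> = (\<integral>\<^sup>+v. ennreal u * ennreal (indicator {a..} v * std_phi (u * v)) \<partial>lborel)"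
  proof -
    have "indicator {..- (a * u)} (0 + (- u) * v) * std_phi (0 + (- u) * v) = indicator {a..} v * std_phi (u * v)" for v
      using assms std_phi_minus by (auto split: split_indicator simp: mult.commute)
    then show ?thesis
      using assms by (simp add: nn_integral_cmult)
  qed
  also have "\<dots> = (\<integral>\<^sup>+v. ennreal (u * std_phi (u * v) * indicator {a..} v) \<partial>lborel)"
    using assms by (intro nn_integral_cong) (simp add: ennreal_mult' std_phi_nonneg mult_ac)
  finally show ?thesis .
qed

lemma nn_integral_std_Phi_tail_swap:
  assumes "0 < a"
  shows "(\<integral>\<^sup>+u. ennreal (indicator {0..} u * (u^k * std_Phi (- (a * u)) * std_phi u)) \<partial>lborel)
       = (\<integral>\<^sup>+v. (\<integral>\<^sup>+u. ennreal (indicator {0..} u * u ^ Suc k * std_phi u * std_phi (u * v)) \<partial>lborel)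
                 * indicator {a..} v \<partial>lborel)"
proof -
  define G where "G u v = ennreal (indicator {0..} u * u ^ Suc k * std_phi u * std_phi (u * v) * indicator {a..} v)"
    for u v :: real
  have G_measurable [measurable]: "case_prod G \<in> borel_measurable (lborel \<Otimes>\<^sub>M lborel)"
    unfolding G_def[abs_def] by measurable
  have inner: "ennreal (indicator {0..} u * (u^k * std_Phi (- (a * u)) * std_phi u)) = (\<integral>\<^sup>+v. G u v \<partial>lborel)"
    if "u \<noteq> 0" for u :: real
  proof (cases "0 < u")
    case False
    with that have "u < 0" by simp
    then show ?thesis by (simp add: G_def)
  next
    case True
    have "ennreal (indicator {0..} u * (u^k * std_Phi (- (a * u)) * std_phi u))
        = ennreal (u^k * std_phi u) * ennreal (std_Phi (- (a * u)))"
      using True by (simp add: ennreal_mult[symmetric] std_phi_nonneg std_Phi_nonneg mult_ac)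
    also have "\<dots> = (\<integral>\<^sup>+v. ennreal (u^k * std_phi u) * ennreal (u * std_phi (u * v) * indicator {a..} v) \<partial>lborel)"
      unfolding std_Phi_minus_mult_eq_nn_integral[OF True] by (rule nn_integral_cmult[symmetric]) measurable
    also have "\<dots> = (\<integral>\<^sup>+v. G u v \<partial>lborel)"
      unfolding G_def using True
      by (intro nn_integral_cong) (simp add: ennreal_mult[symmetric] std_phi_nonneg mult_ac)
    finally show ?thesis .
  qed
  have "(\<integral>\<^sup>+u. ennreal (indicator {0..} u * (u^k * std_Phi (- (a * u)) * std_phi u)) \<partial>lborel)
      = (\<integral>\<^sup>+u. (\<integral>\<^sup>+v. G u v \<partial>lborel) \<partial>lborel)"
    using AE_lborel_singleton[of 0] by (intro nn_integral_cong_AE) (auto elim!: eventually_mono intro: inner)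
  also have "\<dots> = (\<integral>\<^sup>+v. (\<integral>\<^sup>+u. G u v \<partial>lborel) \<partial>lborel)"
    by (rule lborel_pair.Fubini'[symmetric]) (rule G_measurable)
  also have "\<dots> = (\<integral>\<^sup>+v. (\<integral>\<^sup>+u. ennreal (indicator {0..} u * u ^ Suc k * std_phi u * std_phi (u * v)) \<partial>lborel)
                        * indicator {a..} v \<partial>lborel)"
  proof (rule nn_integral_cong)
    fix v :: real
    have "(\<integral>\<^sup>+u. G u v \<partial>lborel)
        = (\<integral>\<^sup>+u. ennreal (indicator {0..} u * u ^ Suc k * std_phi u * std_phi (u * v)) * indicator {a..} v \<partial>lborel)"
      unfolding G_def by (intro nn_integral_cong) (auto split: split_indicator)
    also have "\<dots> = (\<integral>\<^sup>+u. ennreal (indicator {0..} u * u ^ Suc k * std_phi u * std_phi (u * v)) \<partial>lborel)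
                    * indicator {a..} v"
      by (rule nn_integral_multc) measurable
    finally show "(\<integral>\<^sup>+u. G u v \<partial>lborel) = \<dots>" .
  qed
  finally show ?thesis .
qed

lemma nn_integral_moment1_std_phi_std_phi:
  "(\<integral>\<^sup>+u. ennreal (indicator {0..} u * u ^ Suc 0 * std_phi u * std_phi (u * v)) \<partial>lborel)
     = ennreal (1 / (2*pi*(1 + v^2)))"
proof -
  define b where "b = 1 + v^2"
  have b: "0 < b" unfolding b_def by simp
  define f where "f u = u * exp (- (b * u^2)/2) / (2*pi)" for u :: real
  define F where "F u = - exp (- (b * u^2)/2) / (2*pi*b)" for u :: real
  have "(\<integral>\<^sup>+u. ennreal (indicator {0..} u * u ^ Suc 0 * std_phi u * std_phi (u * v)) \<partial>lborel)
      = (\<integral>\<^sup>+u. ennreal (f u) * indicator {0..} u \<partial>lborel)"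
    by (intro nn_integral_cong) (auto simp: f_def b_def mult.assoc std_phi_mult_std_phi split: split_indicator)
  also have "\<dots> = ennreal (0 - F 0)"
  proof (rule nn_integral_FTC_atLeast)
    show "f \<in> borel_measurable borel"
      unfolding f_def[abs_def] by measurable
    show "DERIV F x :> f x" for x
      unfolding F_def f_def using b by (auto intro!: derivative_eq_intros simp: field_simps power2_eq_square)
    show "0 \<le> f x" if "0 \<le> x" for x
      using that unfolding f_def by simp
    show "(F \<longlongrightarrow> 0) at_top"
      unfolding F_def[abs_def] using b by real_asymp
  qed
  also have "0 - F 0 = 1 / (2*pi*(1 + v^2))"
    unfolding F_def b_def by (simp add: field_simps)
  finally show ?thesis .
qed

lemma nn_integral_moment3_std_phi_std_phi:
  "(\<integral>\<^sup>+u. ennreal (indicator {0..} u * u ^ Suc 2 * std_phi u * std_phi (u * v)) \<partial>lborel)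
     = ennreal (1 / (pi*(1 + v^2)^2))"
proof -
  define b where "b = 1 + v^2"
  have b: "0 < b" unfolding b_def by simp
  define f where "f u = u^3 * exp (- (b * u^2)/2) / (2*pi)" for u :: real
  define F where "F u = - (u^2/b + 2/b^2) * exp (- (b * u^2)/2) / (2*pi)" for u :: real
  have "(\<integral>\<^sup>+u. ennreal (indicator {0..} u * u ^ Suc 2 * std_phi u * std_phi (u * v)) \<partial>lborel)
      = (\<integral>\<^sup>+u. ennreal (f u) * indicator {0..} u \<partial>lborel)"
    by (intro nn_integral_cong) (auto simp: f_def b_def mult.assoc std_phi_mult_std_phi split: split_indicator)
  also have "\<dots> = ennreal (0 - F 0)"
  proof (rule nn_integral_FTC_atLeast)
    show "f \<in> borel_measurable borel"
      unfolding f_def[abs_def] by measurable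
    show "DERIV F x :> f x" for x
      unfolding F_def f_def using b
      by (auto intro!: derivative_eq_intros simp: field_simps power2_eq_square eval_nat_numeral)
    show "0 \<le> f x" if "0 \<le> x" for x
      using that unfolding f_def by simp
    show "(F \<longlongrightarrow> 0) at_top"
      unfolding F_def[abs_def] using b by real_asymp
  qed
  also have "0 - F 0 = 1 / (pi*b^2)"
    unfolding F_def using b by (simp add: field_simps power2_eq_square)
  also have "\<dots> = 1 / (pi*(1 + v^2)^2)"
    unfolding b_def ..
  finally show ?thesis .
qed

lemma integral_std_Phi_tail:
  assumes "0 < a"
  shows "(LBINT u:{0..}. std_Phi (- (a * u)) * std_phi u) = 1/4 - arctan a / (2*pi)"
proof -
  define F where "F v = arctan v / (2*pi)" for v :: real
  have F_deriv: "(F has_real_derivative 1 / (2*pi*(1 + v^2))) (at v)" for v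
  proof -
    have "(F has_real_derivative (1 / (1 + v^2)) / (2*pi)) (at v)"
      unfolding F_def by (auto intro!: derivative_eq_intros simp: inverse_eq_divide)
    then show ?thesis
      by (simp add: field_simps)
  qed
  have F_lim: "(F \<longlongrightarrow> 1/4) at_top"
    using tendsto_divide[OF tendsto_arctan_at_top tendsto_const[of "2*pi"]] by (simp add: F_def[abs_def])
  have "(LBINT u:{0..}. std_Phi (- (a * u)) * std_phi u)
      = enn2real (\<integral>\<^sup>+u. ennreal (indicator {0..} u * (u^0 * std_Phi (- (a * u)) * std_phi u)) \<partial>lborel)"
    unfolding set_lebesgue_integral_def
    by (subst integral_eq_nn_integral) (auto simp: std_Phi_nonneg std_phi_nonneg)
  also have "(\<integral>\<^sup>+u. ennreal (indicator {0..} u * (u^0 * std_Phi (- (a * u)) * std_phi u)) \<partial>lborel)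
      = (\<integral>\<^sup>+v. ennreal (1 / (2*pi*(1 + v^2))) * indicator {a..} v \<partial>lborel)"
    unfolding nn_integral_std_Phi_tail_swap[OF assms] nn_integral_moment1_std_phi_std_phi ..
  also have "\<dots> = ennreal (1/4 - F a)"
    using F_deriv F_lim by (intro nn_integral_FTC_atLeast) auto
  finally show ?thesis
    using arctan_bounded[of a] by (simp add: F_def)
qed

lemma integral_std_Phi_tail_moment2:
  assumes "0 < a"
  shows "(LBINT u:{0..}. u^2 * std_Phi (- (a * u)) * std_phi u) = 1/4 - (arctan a + a/(1 + a^2)) / (2*pi)"
proof -
  define F where "F v = (arctan v + v/(1 + v^2)) / (2*pi)" for v :: real
  have F_deriv: "(F has_real_derivative 1 / (pi*(1 + v^2)^2)) (at v)" for v
    unfolding F_def by (auto intro!: derivative_eq_intros simp: divide_simps) algebra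
  have "((\<lambda>v::real. v/(1 + v^2)) \<longlongrightarrow> 0) at_top"
    by real_asymp
  then have "(F \<longlongrightarrow> (pi/2 + 0) / (2*pi)) at_top"
    unfolding F_def[abs_def] by (intro tendsto_divide tendsto_const tendsto_add tendsto_arctan_at_top) auto
  then have F_lim: "(F \<longlongrightarrow> 1/4) at_top"
    by simp
  have "(LBINT u:{0..}. u^2 * std_Phi (- (a * u)) * std_phi u)
      = enn2real (\<integral>\<^sup>+u. ennreal (indicator {0..} u * (u^2 * std_Phi (- (a * u)) * std_phi u)) \<partial>lborel)"
    unfolding set_lebesgue_integral_def
    by (subst integral_eq_nn_integral) (auto simp: std_Phi_nonneg std_phi_nonneg)
  also have "(\<integral>\<^sup>+u. ennreal (indicator {0..} u * (u^2 * std_Phi (- (a * u)) * std_phi u)) \<partial>lborel)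
      = (\<integral>\<^sup>+v. ennreal (1 / (pi*(1 + v^2)^2)) * indicator {a..} v \<partial>lborel)"
    unfolding nn_integral_std_Phi_tail_swap[OF assms] nn_integral_moment3_std_phi_std_phi ..
  also have "\<dots> = ennreal (1/4 - F a)"
    using F_deriv F_lim by (intro nn_integral_FTC_atLeast) auto
  finally show ?thesis
    using DERIV_pos_imp_less_lim_at_top[of a F, OF _ F_lim] F_deriv by (fastforce simp: F_def)
qed

definition speed_profile :: "real \<Rightarrow> real" where
  "speed_profile a = a^2 * (1/4 - (arctan a + a/(1 + a^2)) / (2*pi))"

definition speed_profile_slope :: "real \<Rightarrow> real" where
  "speed_profile_slope a = pi/2 - arctan a - a/(1 + a^2) - a/(1 + a^2)^2"

lemma g_speed_eq_speed_profile:
  assumes "0 < \<xi> * sqrt (c * I)" and "0 < l"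
  shows "g_speed I c \<xi> l = 16 * c / (\<xi> * sqrt (c * I))^2 * speed_profile (l * (\<xi> * sqrt (c * I)) / 2)"
proof -
  define k where "k = \<xi> * sqrt (c * I)"
  define a where "a = l * k / 2"
  have "0 < a"
    using assms unfolding a_def k_def by simp
  have arg: "- (u * l * \<xi> * sqrt (c * I)) / 2 = - (a * u)" for u
    unfolding a_def k_def by (simp add: field_simps)
  have "g_speed I c \<xi> l = 4 * c * l^2 * (1/4 - (arctan a + a/(1 + a^2)) / (2*pi))"
    unfolding g_speed_def arg integral_std_Phi_tail_moment2[OF \<open>0 < a\<close>] ..
  also have "\<dots> = 16 * c / k^2 * speed_profile a"
  proof -
    have "a^2 = l^2 * k^2 / 4"
      unfolding a_def by (simp add: power_mult_distrib power_divide)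
    moreover have "k \<noteq> 0"
      using assms(1) unfolding k_def by linarith
    ultimately have "16 * c / k^2 * a^2 = 4 * c * l^2"
      by (simp add: field_simps)
    then show ?thesis
      unfolding speed_profile_def by (metis mult.assoc)
  qed
  finally show ?thesis
    unfolding a_def k_def .
qed

lemma acc_rate_eq_arctan:
  assumes "0 < \<xi> * sqrt (c * I)" and "0 < l"
  shows "acc_rate I c \<xi> l = 1 - 2 * arctan (l * (\<xi> * sqrt (c * I)) / 2) / pi"
proof -
  define a where "a = l * (\<xi> * sqrt (c * I)) / 2"
  have "0 < a"
    using assms unfolding a_def by simp
  have arg: "- (u * l * \<xi> * sqrt (c * I)) / 2 = - (a * u)" for u
    unfolding a_def by (simp add: field_simps)
  have "acc_rate I c \<xi> l = 4 * (1/4 - arctan a / (2*pi))"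
    unfolding acc_rate_def arg integral_std_Phi_tail[OF \<open>0 < a\<close>] ..
  then show ?thesis
    unfolding a_def by (simp add: field_simps)
qed

lemma g_speed_maximal_iff_speed_profile_maximal:
  assumes "0 < \<xi> * sqrt (c * I)" and "0 < c" and "0 < l"
  shows "(\<forall>l'>0. g_speed I c \<xi> l' \<le> g_speed I c \<xi> l)
     \<longleftrightarrow> (\<forall>b>0. speed_profile b \<le> speed_profile (l * (\<xi> * sqrt (c * I)) / 2))"
proof -
  define k where "k = \<xi> * sqrt (c * I)"
  have "0 < k"
    using assms unfolding k_def by simp
  with \<open>0 < c\<close> have "0 < 16 * c / k^2"
    by simp
  have le_iff: "g_speed I c \<xi> l' \<le> g_speed I c \<xi> l \<longleftrightarrow> speed_profile (l' * k / 2) \<le> speed_profile (l * k / 2)"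
    if "0 < l'" for l'
    unfolding g_speed_eq_speed_profile[OF assms(1) that] g_speed_eq_speed_profile[OF assms(1,3)] k_def[symmetric]
    using \<open>0 < 16 * c / k^2\<close> by (rule mult_le_cancel_left_pos)
  show ?thesis
    unfolding k_def[symmetric]
  proof safe
    fix b :: real
    assume "\<forall>l'>0. g_speed I c \<xi> l' \<le> g_speed I c \<xi> l" and "0 < b"
    then have "speed_profile ((2 * b / k) * k / 2) \<le> speed_profile (l * k / 2)"
      using \<open>0 < k\<close> le_iff[of "2 * b / k"] by simp
    then show "speed_profile b \<le> speed_profile (l * k / 2)"
      using \<open>0 < k\<close> by simp
  next
    fix l' :: real
    assume "\<forall>b>0. speed_profile b \<le> speed_profile (l * k / 2)" and "0 < l'"
    then show "g_speed I c \<xi> l' \<le> g_speed I c \<xi> l"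
      using \<open>0 < k\<close> le_iff by simp
  qed
qed

lemma speed_profile_slope_deriv:
  "(speed_profile_slope has_real_derivative - (3 - a^2) / (1 + a^2)^3) (at a)"
  unfolding speed_profile_slope_def[abs_def]
  by (rule derivative_eq_intros refl | simp)+ (simp add: divide_simps, algebra)

lemma speed_profile_deriv:
  "(speed_profile has_real_derivative a * speed_profile_slope a / pi) (at a)"
  unfolding speed_profile_def[abs_def] speed_profile_slope_def
  by (rule derivative_eq_intros refl | simp)+ (simp add: divide_simps, algebra)

lemma speed_profile_slope_strict_antimono:
  assumes "0 \<le> a" and "a < b" and "b^2 < 3"
  shows "speed_profile_slope b < speed_profile_slope a"
proof (rule DERIV_neg_imp_decreasing[OF \<open>a < b\<close>])
  fix x :: real
  assume "a \<le> x" "x \<le> b"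
  with assms have "x^2 < 3"
    using power_mono[of x b 2] by linarith
  then have "- (3 - x^2) / (1 + x^2)^3 < 0"
    by (intro divide_neg_pos) auto
  then show "\<exists>y. (speed_profile_slope has_real_derivative y) (at x) \<and> y < 0"
    using speed_profile_slope_deriv by blast
qed

text \<open>The substitution \<open>(a - 1)/(a + 1)\<close> brings the argument of \<open>arctan\<close> close to \<open>0\<close>,
  where the Taylor bounds are sharp enough.\<close>

lemma speed_profile_slope_at_lower: "0 < speed_profile_slope 1.2128"
proof -
  define T :: real where "T = 133/1383 - (133/1383)^3/3 + (133/1383)^5/5"
  define R :: real where "R = 1.2128/(1 + 1.2128^2) + 1.2128/(1 + 1.2128^2)^2"
  have "arctan (1.2128::real) = pi/4 + arctan (133/1383)"
    using arctan_eq_pi_div_4_plus_arctan[of "1.2128"] by simp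
  moreover have "arctan (133/1383::real) \<le> T"
    unfolding T_def by (rule arctan_le_taylor5) simp
  moreover have "T + R < 3141592653588/4000000000000"
    unfolding T_def R_def by (simp add: power_divide power2_eq_square)
  moreover have "speed_profile_slope 1.2128 = pi/2 - arctan 1.2128 - R"
    unfolding speed_profile_slope_def R_def by simp
  ultimately show ?thesis
    using pi_approx(1) by simp
qed

lemma speed_profile_slope_at_upper: "speed_profile_slope 1.21324 < 0"
proof -
  define T :: real where "T = 5331/55331 - (5331/55331)^3/3 + (5331/55331)^5/5 - (5331/55331)^7/7"
  define R :: real where "R = 1.21324/(1 + 1.21324^2) + 1.21324/(1 + 1.21324^2)^2"
  have "arctan (1.21324::real) = pi/4 + arctan (5331/55331)"
    using arctan_eq_pi_div_4_plus_arctan[of "1.21324"] by simp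
  moreover have "T \<le> arctan (5331/55331::real)"
    unfolding T_def by (rule taylor7_le_arctan) simp
  moreover have "31415926535899/40000000000000 < T + R"
    unfolding T_def R_def by (simp add: power_divide power2_eq_square)
  moreover have "speed_profile_slope 1.21324 = pi/2 - arctan 1.21324 - R"
    unfolding speed_profile_slope_def R_def by simp
  ultimately show ?thesis
    using pi_approx(2) by simp
qed

text \<open>For large \<open>a\<close> use \<open>\<pi>/2 - arctan a = arctan (1/a)\<close> and bound \<open>arctan (1/a)\<close> by its
  Taylor polynomial; in terms of \<open>t = a\<^sup>2\<close> this leaves a polynomial inequality.\<close>

lemma speed_profile_slope_neg_large:
  assumes "1.7 \<le> a"
  shows "speed_profile_slope a < 0"
proof -
  define t where "t = a^2"
  define x where "x = 1/a"
  have "0 < a" using assms by linarith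
  have "1.7^2 \<le> a^2"
    using assms by (intro power_mono) auto
  then have t: "289/100 \<le> t"
    unfolding t_def by (simp add: power_divide)
  have "arctan x = pi/2 - arctan a"
    using arctan_inverse[of a] \<open>0 < a\<close> by (simp add: x_def inverse_eq_divide)
  then have slope: "speed_profile_slope a = arctan x - a/(1 + a^2) - a/(1 + a^2)^2"
    unfolding speed_profile_slope_def by simp
  have taylor: "x - x^3/3 + x^5/5 = (t^2 - t/3 + 1/5) / (a * t^2)"
    using \<open>0 < a\<close> unfolding x_def t_def by (simp add: field_simps eval_nat_numeral)
  have rhs: "a/(1 + a^2) + a/(1 + a^2)^2 = a * (2 + t) / (1 + t)^2"
    unfolding t_def by (simp add: divide_simps) algebra
  have "(a * (2 + t)) * (a * t^2) = t^4 + 2*t^3"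
    unfolding t_def by (simp add: algebra_simps eval_nat_numeral)
  moreover have "t^4 + 2*t^3 - (t^2 - t/3 + 1/5) * (1 + t)^2 = t * t^2/3 - 8*t^2/15 - t/15 - 1/5"
    by (simp add: algebra_simps power2_eq_square power3_eq_cube eval_nat_numeral)
  moreover have "289/100 * t^2 \<le> t * t^2" "289/100 * t \<le> t^2"
    using t by (simp_all add: mult_right_mono power2_eq_square)
  ultimately have "(t^2 - t/3 + 1/5) * (1 + t)^2 < (a * (2 + t)) * (a * t^2)"
    using t by linarith
  then have "x - x^3/3 + x^5/5 < a/(1 + a^2) + a/(1 + a^2)^2"
    unfolding taylor rhs using \<open>0 < a\<close> t by (simp add: divide_simps)
  moreover have "arctan x \<le> x - x^3/3 + x^5/5"
    using \<open>0 < a\<close> by (intro arctan_le_taylor5) (simp add: x_def)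
  ultimately show ?thesis
    unfolding slope by linarith
qed

lemma speed_profile_slope_pos:
  assumes "0 < a" and "a \<le> 1.2128"
  shows "0 < speed_profile_slope a"
proof (cases "a = 1.2128")
  case True
  then show ?thesis
    using speed_profile_slope_at_lower by (simp only:)
next
  case False
  with assms have "speed_profile_slope 1.2128 < speed_profile_slope a"
    by (intro speed_profile_slope_strict_antimono) (auto simp: power2_eq_square)
  with speed_profile_slope_at_lower show ?thesis
    by linarith
qed

lemma speed_profile_slope_neg:
  assumes "1.21324 \<le> a"
  shows "speed_profile_slope a < 0"
proof -
  consider "1.7 \<le> a" | "a = 1.21324" | "1.21324 < a" "a < 1.7"
    using assms by linarith
  then show ?thesis
  proof cases
    case 1
    then show ?thesis
      by (rule speed_profile_slope_neg_large)
  next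
    case 2
    then show ?thesis
      using speed_profile_slope_at_upper by (simp only:)
  next
    case 3
    then have "a^2 < 1.7^2"
      by (intro power_strict_mono) auto
    with 3 have "speed_profile_slope a < speed_profile_slope 1.21324"
      by (intro speed_profile_slope_strict_antimono) (auto simp: power2_eq_square)
    with speed_profile_slope_at_upper show ?thesis
      by linarith
  qed
qed

lemma speed_profile_less_at_lower:
  assumes "0 < a" and "a < 1.2128"
  shows "speed_profile a < speed_profile 1.2128"
proof (rule DERIV_pos_imp_increasing[OF \<open>a < 1.2128\<close>])
  fix x :: real
  assume "a \<le> x" "x \<le> 1.2128"
  with assms have "0 < x" "0 < speed_profile_slope x"
    using speed_profile_slope_pos by auto
  then have "0 < x * speed_profile_slope x / pi"
    by simp
  then show "\<exists>y. (speed_profile has_real_derivative y) (at x) \<and> 0 < y"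
    using speed_profile_deriv by blast
qed

lemma speed_profile_less_at_upper:
  assumes "1.21324 < a"
  shows "speed_profile a < speed_profile 1.21324"
proof (rule DERIV_neg_imp_decreasing[OF \<open>1.21324 < a\<close>])
  fix x :: real
  assume "1.21324 \<le> x" "x \<le> a"
  then have "0 < x" "speed_profile_slope x < 0"
    using speed_profile_slope_neg by auto
  then have "x * speed_profile_slope x / pi < 0"
    by (simp add: mult_pos_neg divide_neg_pos)
  then show "\<exists>y. (speed_profile has_real_derivative y) (at x) \<and> y < 0"
    using speed_profile_deriv by blast
qed

lemma exists_maximum_on_pos_in_interval:
  fixes f :: "real \<Rightarrow> real"
  assumes "p \<le> q" and "continuous_on {p..q} f"
    and left: "\<And>x. 0 < x \<Longrightarrow> x < p \<Longrightarrow> f x < f p"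
    and right: "\<And>x. q < x \<Longrightarrow> f x < f q"
  shows "\<exists>m\<in>{p..q}. \<forall>x>0. f x \<le> f m"
proof -
  obtain m where m: "m \<in> {p..q}" and max: "\<And>y. y \<in> {p..q} \<Longrightarrow> f y \<le> f m"
    using continuous_attains_sup[of "{p..q}" f] assms(1,2) by auto
  have "f p \<le> f m" "f q \<le> f m"
    using max assms(1) by simp_all
  have "f x \<le> f m" if "0 < x" for x
  proof -
    consider "x < p" | "x \<in> {p..q}" | "q < x"
      by force
    then show ?thesis
    proof cases
      case 1
      with left[OF \<open>0 < x\<close>] \<open>f p \<le> f m\<close> show ?thesis
        by linarith
    next
      case 3
      with right \<open>f q \<le> f m\<close> show ?thesis
        by (meson less_imp_le order_trans)
    qed (rule max)
  qed
  with m show ?thesis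
    by blast
qed

lemma maximum_on_pos_in_interval:
  fixes f :: "real \<Rightarrow> real"
  assumes "0 < m" and max: "\<forall>x>0. f x \<le> f m" and "0 < p" and "p \<le> q"
    and left: "\<And>x. 0 < x \<Longrightarrow> x < p \<Longrightarrow> f x < f p"
    and right: "\<And>x. q < x \<Longrightarrow> f x < f q"
  shows "m \<in> {p..q}"
proof -
  have "f p \<le> f m" "f q \<le> f m"
    using max assms(3,4) by simp_all
  moreover have "\<not> f p \<le> f m" if "m < p"
    using left[OF \<open>0 < m\<close> that] by simp
  moreover have "\<not> f q \<le> f m" if "q < m"
    using right[OF that] by simp
  ultimately show ?thesis
    by (meson atLeastAtMost_iff not_less)
qed

lemma continuous_on_speed_profile: "continuous_on S speed_profile"
  using speed_profile_deriv by (meson DERIV_isCont continuous_at_imp_continuous_on)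

lemma round3_double:
  assumes "1.2128 \<le> a" and "a \<le> 1.21324"
  shows "round3 (2 * a) = 2.426"
proof -
  have "\<bar>1000 * (2 * a) - of_int 2426\<bar> < 1/2"
    unfolding abs_less_iff using assms by simp
  then have "round (1000 * (2 * a)) = 2426"
    by (rule round_unique')
  then show ?thesis
    unfolding round3_def by simp
qed

lemma round3_acceptance:
  assumes "1.2128 \<le> a" and "a \<le> 1.21324"
  shows "round3 (1 - 2 * arctan a / pi) = 0.439"
proof -
  define y where "y = (a - 1)/(a + 1)"
  define T_lo :: real where "T_lo = 133/1383 - (133/1383)^3/3 + (133/1383)^5/5 - (133/1383)^7/7"
  define T_hi :: real where "T_hi = 5331/55331 - (5331/55331)^3/3 + (5331/55331)^5/5"
  have arctan_a: "arctan a = pi/4 + arctan y"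
    unfolding y_def using assms by (intro arctan_eq_pi_div_4_plus_arctan) simp
  have "133/1383 \<le> y" "y \<le> 5331/55331"
    unfolding y_def using assms by (simp_all add: divide_simps)
  have "T_lo \<le> arctan (133/1383)"
    unfolding T_lo_def by (rule taylor7_le_arctan) simp
  also have "\<dots> \<le> arctan y"
    using \<open>133/1383 \<le> y\<close> by (simp add: arctan_le_iff)
  finally have "T_lo \<le> arctan y" .
  have "arctan y \<le> arctan (5331/55331)"
    using \<open>y \<le> 5331/55331\<close> by (simp add: arctan_le_iff)
  also have "\<dots> \<le> T_hi"
    unfolding T_hi_def by (rule arctan_le_taylor5) simp
  finally have "arctan y \<le> T_hi" .
  note \<open>T_lo \<le> arctan y\<close> \<open>arctan y \<le> T_hi\<close>
  moreover have "3025/100000 * (31415926535899/10000000000000) < T_lo"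
    unfolding T_lo_def by (simp add: power_divide)
  moreover have "T_hi < 3075/100000 * (3141592653588/1000000000000)"
    unfolding T_hi_def by (simp add: power_divide)
  ultimately have "3025/100000 * pi < arctan y" "arctan y < 3075/100000 * pi"
    using pi_approx by simp_all
  then have "3025/100000 < arctan y / pi" "arctan y / pi < 3075/100000"
    by (simp_all add: field_simps)
  define z where "z = arctan y / pi"
  from \<open>3025/100000 < arctan y / pi\<close> \<open>arctan y / pi < 3075/100000\<close>
  have "3025/100000 < z" "z < 3075/100000"
    unfolding z_def .
  then have "\<bar>1000 * (1/2 - 2 * z) - of_int 439\<bar> < 1/2"
    unfolding abs_less_iff by simp
  moreover have "1 - 2 * arctan a / pi = 1/2 - 2 * z"
    unfolding z_def arctan_a by (simp add: field_simps)
  ultimately have "round (1000 * (1 - 2 * arctan a / pi)) = 439"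
    by (simp add: round_unique')
  then show ?thesis
    unfolding round3_def by simp
qed

theorem corollary4:
  fixes I \<xi> c :: real
  assumes "I > 0" and "\<xi> > 0" and "0 < c" and "c \<le> 1"
  shows "(\<exists>l>0. \<forall>l'>0. g_speed I c \<xi> l' \<le> g_speed I c \<xi> l)
       \<and> (\<forall>l_opt>0. (\<forall>l'>0. g_speed I c \<xi> l' \<le> g_speed I c \<xi> l_opt) \<longrightarrow>
            round3 (l_opt * \<xi> * sqrt (c * I)) = 2.426
          \<and> round3 (acc_rate I c \<xi> l_opt) = 0.439)"
proof -
  define k where "k = \<xi> * sqrt (c * I)"
  have "0 < k"
    using assms unfolding k_def by simp
  have maximal_iff: "(\<forall>l'>0. g_speed I c \<xi> l' \<le> g_speed I c \<xi> l) \<longleftrightarrow> (\<forall>b>0. speed_profile b \<le> speed_profile (l * k / 2))"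
    if "0 < l" for l
    using g_speed_maximal_iff_speed_profile_maximal[OF _ \<open>0 < c\<close> that] \<open>0 < k\<close> unfolding k_def by simp
  obtain m where m: "m \<in> {1.2128..1.21324}" "\<forall>b>0. speed_profile b \<le> speed_profile m"
    using exists_maximum_on_pos_in_interval[OF _ continuous_on_speed_profile
        speed_profile_less_at_lower speed_profile_less_at_upper] by auto
  have "0 < 2 * m / k" "2 * m / k * k / 2 = m"
    using m(1) \<open>0 < k\<close> by auto
  with m(2) maximal_iff have "\<exists>l>0. \<forall>l'>0. g_speed I c \<xi> l' \<le> g_speed I c \<xi> l"
    by metis
  moreover have "round3 (l * \<xi> * sqrt (c * I)) = 2.426 \<and> round3 (acc_rate I c \<xi> l) = 0.439"
    if "0 < l" and "\<forall>l'>0. g_speed I c \<xi> l' \<le> g_speed I c \<xi> l" for l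
  proof -
    have "0 < l * k / 2"
      using \<open>0 < l\<close> \<open>0 < k\<close> by simp
    moreover have "\<forall>b>0. speed_profile b \<le> speed_profile (l * k / 2)"
      using maximal_iff[OF \<open>0 < l\<close>] that(2) by blast
    ultimately have "l * k / 2 \<in> {1.2128..1.21324}"
      by (rule maximum_on_pos_in_interval[OF _ _ _ _ speed_profile_less_at_lower speed_profile_less_at_upper]) simp_all
    moreover have "acc_rate I c \<xi> l = 1 - 2 * arctan (l * k / 2) / pi"
      using acc_rate_eq_arctan \<open>0 < k\<close> \<open>0 < l\<close> unfolding k_def by blast
    ultimately show ?thesis
      using round3_double[of "l * k / 2"] round3_acceptance[of "l * k / 2"] unfolding k_def by (simp add: mult.assoc)
  qed
  ultimately show ?thesis
    by blast
qed

end
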